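(* Let $X\in\mathbb{R}^{n\times p}$ with columns $X_1,\ldots,X_p$, let $\lambda_1>0$, and assume $np<p(p-1)/2$. (SPLICE) Let $D\in\mathbb{R}^{p\times p}$ be any diagonal matrix with positive diagonal entries (the previous iterate $\hat D^{(i-1)}$). Then there is a minimizer $\hat B$, over matrices $B\in\mathbb{R}^{p\times p}$ with zero diagonal, of $$ -\tfrac12\log\det D + \tfrac12\sum_{m=1}^p \frac{1}{D_{mm}^2}\big\|X_m - X_{-m}(B_{m\cdot})^T\big\|_2^2 + \lambda_1\|B\|_1 $$ such that $\hat\Omega^{\mathrm{spl}} = D^{-2}(I-\hat B)$ satisfies $\operatorname{card}\operatorname{vech}\hat\Omega^{\mathrm{spl}}\le np$. (SPACE) Let $\Omega_{\mathrm{diag}}$ be any diagonal matrix with positive diagonal entries (the previous iterate). Then there is a minimizer $\hat\Omega_{\mathrm{off}}$, over symmetric matrices $\Omega_{\mathrm{off}}\in\mathbb{R}^{p\times p}$ with zero diagonal, of $$ -\tfrac12\log\det\Omega_{\mathrm{diag}} + \tfrac12\sum_{m=1}^p\Omega_{\mathrm{diag},mm}\Big\|X_m-\sum_{j\ne m}\Omega_{\mathrm{off},mj}\sqrt{\Omega_{\mathrm{diag},jj}/\Omega_{\mathrm{diag},mm}}\,X_j\Big\|_2^2+\lambda_1\|\Omega_{\mathrm{off}}\|_1 $$ such that $\hat\Omega^{\mathrm{spc}} = \Omega_{\mathrm{diag}}+\hat\Omega_{\mathrm{off}}$ satisfies $\operatorname{card}\operatorname{vech}\hat\Omega^{\mathrm{spc}}\le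 np$. That is, for every iteration $i$ of the alternating minimization defining the SPLICE and SPACE estimators, there exist SPLICE and SPACE estimates at the end of iteration $i$ with at most $np$ nonzero strictly lower-triangular entries.
   Context: The SPLICE estimator alternately minimizes the displayed SPLICE objective over a diagonal matrix $D$ and a zero-diagonal matrix $B$, forming at iteration $i$ the estimate $\hat\Omega^{\mathrm{spl},(i)} = (\hat D^{(i-1)})^{-2}(I-\hat B^{(i)})$, where $\hat B^{(i)}$ minimizes over $B$ with $D=\hat D^{(i-1)}$ fixed. The SPACE estimator alternately minimizes the displayed SPACE objective over $\Omega_{\mathrm{diag}}$ and $\Omega_{\mathrm{off}}$, with estimate $\hat\Omega^{\mathrm{spc},(i)} = \hat\Omega^{(i)}_{\mathrm{diag}}+\hat\Omega^{(i)}_{\mathrm{off}}$. $X_{-m}$ is $X$ with column $m$ removed; $B_{m\cdot}$ is the $m$th row of $B$ with the entry $B_{mm}$ removed; $\|\cdot\|_1$ is the elementwise $\ell_1$ norm. $\operatorname{vech}$ gives the vector of strictly lower-triangular entries of a $p\times p$ matrix, and $\operatorname{card}$ counts nonzero entries. *)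

theory Defs
  imports "HOL-Analysis.Analysis"
begin

text \<open>Matrices are represented as functions nat => nat => real; a p x p matrix
is one that vanishes outside {0..<p} x {0..<p}. The data matrix X is n x p,
with entry X i j for row i < n, column j < p (0-based indices).\<close>

definition sq_mat :: "nat \<Rightarrow> (nat \<Rightarrow> nat \<Rightarrow> real) \<Rightarrow> bool" where
  "sq_mat p A \<longleftrightarrow> (\<forall>i j. (i \<ge> p \<or> j \<ge> p) \<longrightarrow> A i j = 0)"

definition diag_pos :: "nat \<Rightarrow> (nat \<Rightarrow> nat \<Rightarrow> real) \<Rightarrow> bool" where
  "diag_pos p D \<longleftrightarrow> sq_mat p D \<and> (\<forall>i j. i \<noteq> j \<longrightarrow> D i j = 0) \<and> (\<forall>i<p. D i i > 0)"

definition zero_diag :: "nat \<Rightarrow> (nat \<Rightarrow> nat \<Rightarrow> real) \<Rightarrow> bool" where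
  "zero_diag p B \<longleftrightarrow> sq_mat p B \<and> (\<forall>i. B i i = 0)"

definition detp :: "nat \<Rightarrow> (nat \<Rightarrow> nat \<Rightarrow> real) \<Rightarrow> real" where
  "detp p A = (\<Sum>\<sigma> | \<sigma> permutes {..<p}. of_int (sign \<sigma>) * (\<Prod>i<p. A i (\<sigma> i)))"

definition l1 :: "nat \<Rightarrow> (nat \<Rightarrow> nat \<Rightarrow> real) \<Rightarrow> real" where
  "l1 p A = (\<Sum>i<p. \<Sum>j<p. \<bar>A i j\<bar>)"

definition sqn :: "nat \<Rightarrow> (nat \<Rightarrow> real) \<Rightarrow> real" where
  "sqn n v = (\<Sum>i<n. (v i)\<^sup>2)"

definition card_vech :: "nat \<Rightarrow> (nat \<Rightarrow> nat \<Rightarrow> real) \<Rightarrow> nat" where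
  "card_vech p A = card {(i, j). j < i \<and> i < p \<and> A i j \<noteq> 0}"

definition splice_obj ::
  "nat \<Rightarrow> nat \<Rightarrow> (nat \<Rightarrow> nat \<Rightarrow> real) \<Rightarrow> real \<Rightarrow> (nat \<Rightarrow> nat \<Rightarrow> real)
   \<Rightarrow> (nat \<Rightarrow> nat \<Rightarrow> real) \<Rightarrow> real" where
  "splice_obj n p X lam D B =
     - (1/2) * ln (detp p D)
     + (1/2) * (\<Sum>m<p. (1 / (D m m)\<^sup>2) *
          sqn n (\<lambda>i. X i m - (\<Sum>j\<in>{..<p} - {m}. B m j * X i j)))
     + lam * l1 p B"

definition space_obj ::
  "nat \<Rightarrow> nat \<Rightarrow> (nat \<Rightarrow> nat \<Rightarrow> real) \<Rightarrow> real \<Rightarrow> (nat \<Rightarrow> nat \<Rightarrow> real)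
   \<Rightarrow> (nat \<Rightarrow> nat \<Rightarrow> real) \<Rightarrow> real" where
  "space_obj n p X lam Od Oo =
     - (1/2) * ln (detp p Od)
     + (1/2) * (\<Sum>m<p. Od m m *
          sqn n (\<lambda>i. X i m - (\<Sum>j\<in>{..<p} - {m}. Oo m j * sqrt (Od j j / Od m m) * X i j)))
     + lam * l1 p Oo"

definition splice_est :: "(nat \<Rightarrow> nat \<Rightarrow> real) \<Rightarrow> (nat \<Rightarrow> nat \<Rightarrow> real) \<Rightarrow> nat \<Rightarrow> nat \<Rightarrow> real" where
  "splice_est D B i j = (1 / (D i i)\<^sup>2) * ((if i = j then 1 else 0) - B i j)"

end

theory Submission
  imports Defs
begin

text \<open>With the diagonal factor fixed, either update is a weighted lasso: minimize
  \<open>\<Sum>q. c q * (y q - \<Sum>k. A q k * b k)\<^sup>2 + \<Sum>k. w k * \<bar>b k\<bar>\<close> over coefficients \<open>b\<close>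
  supported on an index set \<open>K\<close>, with one squared residual per pair (column \<open>m\<close>, observation \<open>i\<close>),
  i.e. \<open>np\<close> residuals. For SPLICE the coefficients are the off-diagonal entries of \<open>B\<close>; for SPACE
  they are the strictly lower entries of the symmetric \<open>\<Omega>\<^sub>o\<^sub>f\<^sub>f\<close>, each entering the
  residuals of both its row and its column. A lasso with positive weights is coercive, so it has a
  minimizer; take one of least support. If the support had more than \<open>np\<close> elements, the
  corresponding design columns would admit a null combination \<open>d\<close>. Along \<open>b + t d\<close> the fit
  does not change and the penalty is affine until the first coefficient reaches zero, so by
  minimality the objective is constant there, and that endpoint is a minimizer of smaller support.
  Finally, the nonzero strictly lower entries of the estimate lie in the support.\<close>

definition lasso_obj ::
  "'q set \<Rightarrow> 'k set \<Rightarrow> ('q \<Rightarrow> real) \<Rightarrow> ('q \<Rightarrow> real) \<Rightarrow> ('q \<Rightarrow> 'k \<Rightarrow> real) \<Rightarrow> ('k \<Rightarrow> real)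
   \<Rightarrow> ('k \<Rightarrow> real) \<Rightarrow> real" where
  "lasso_obj N K c y A w b =
     (\<Sum>q\<in>N. c q * (y q - (\<Sum>k\<in>K. A q k * b k))\<^sup>2) + (\<Sum>k\<in>K. w k * \<bar>b k\<bar>)"

definition lasso_minimizer ::
  "'q set \<Rightarrow> 'k set \<Rightarrow> ('q \<Rightarrow> real) \<Rightarrow> ('q \<Rightarrow> real) \<Rightarrow> ('q \<Rightarrow> 'k \<Rightarrow> real) \<Rightarrow> ('k \<Rightarrow> real)
   \<Rightarrow> ('k \<Rightarrow> real) \<Rightarrow> bool" where
  "lasso_minimizer N K c y A w b \<longleftrightarrow>
     (\<forall>k. k \<notin> K \<longrightarrow> b k = 0) \<and>
     (\<forall>b'. (\<forall>k. k \<notin> K \<longrightarrow> b' k = 0) \<longrightarrow> lasso_obj N K c y A w b \<le> lasso_obj N K c y A w b')"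

lemma continuous_on_lasso_obj: "continuous_on UNIV (lasso_obj N K c y A w)"
  unfolding lasso_obj_def
  by (intro continuous_intros continuous_on_product_then_coordinatewise continuous_on_id)

lemma weighted_abs_le_lasso_obj:
  assumes "finite K" "\<And>q. q \<in> N \<Longrightarrow> c q \<ge> 0" "\<And>k. k \<in> K \<Longrightarrow> w k \<ge> 0" "k \<in> K"
  shows "w k * \<bar>b k\<bar> \<le> lasso_obj N K c y A w b"
proof -
  have "w k * \<bar>b k\<bar> \<le> (\<Sum>k\<in>K. w k * \<bar>b k\<bar>)"
    using assms by (intro member_le_sum) auto
  also have "\<dots> \<le> lasso_obj N K c y A w b"
    unfolding lasso_obj_def using assms(2) by (auto intro!: sum_nonneg)
  finally show ?thesis .
qed

lemma lasso_minimizer_exists: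
  assumes K: "finite K" and c: "\<And>q. q \<in> N \<Longrightarrow> c q \<ge> 0" and w: "\<And>k. k \<in> K \<Longrightarrow> w k > 0"
  shows "\<exists>b. lasso_minimizer N K c y A w b"
proof -
  let ?F = "lasso_obj N K c y A w"
  define box where "box k = (if k \<in> K then {- (?F (\<lambda>_. 0) / w k) .. ?F (\<lambda>_. 0) / w k} else {0})" for k
  \<comment> \<open>Outside this box the penalty alone exceeds the objective at \<open>0\<close>.\<close>
  define S where "S = PiE UNIV box"
  have "compactin (product_topology (\<lambda>_. euclidean) UNIV) S"
    unfolding S_def box_def compactin_PiE by auto
  then have "compact S"
    by (simp add: euclidean_product_topology)
  have zero_in_S: "(\<lambda>_. 0) \<in> S"
  proof -
    have "?F (\<lambda>_. 0) \<ge> 0"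
      unfolding lasso_obj_def using c by (auto intro!: sum_nonneg)
    then show ?thesis
      unfolding S_def box_def using w by (auto intro!: divide_nonneg_pos)
  qed
  obtain b where "b \<in> S" and b_min: "\<And>b'. b' \<in> S \<Longrightarrow> ?F b \<le> ?F b'"
    using continuous_attains_inf[OF \<open>compact S\<close> _ continuous_on_subset[OF continuous_on_lasso_obj]] zero_in_S
    by blast
  have "b k = 0" if "k \<notin> K" for k
  proof -
    have "b k \<in> box k"
      using \<open>b \<in> S\<close> unfolding S_def by auto
    then show ?thesis
      using that by (simp add: box_def)
  qed
  moreover have "?F b \<le> ?F b'" if b': "\<forall>k. k \<notin> K \<longrightarrow> b' k = 0" for b'
  proof (cases "b' \<in> S")
    case False
    then obtain k where "b' k \<notin> box k"
      unfolding S_def by auto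
    then have "k \<in> K" and "\<bar>b' k\<bar> > ?F (\<lambda>_. 0) / w k"
      using b' by (auto simp: box_def split: if_splits)
    then have "?F (\<lambda>_. 0) < w k * \<bar>b' k\<bar>"
      using w by (simp add: field_simps)
    also have "\<dots> \<le> ?F b'"
      using K c w \<open>k \<in> K\<close> by (intro weighted_abs_le_lasso_obj) (auto intro: less_imp_le)
    finally show ?thesis
      using b_min[OF zero_in_S] by linarith
  qed (rule b_min)
  ultimately show ?thesis
    unfolding lasso_minimizer_def by blast
qed

lemma underdetermined_system_has_nonzero_solution:
  fixes A :: "'e \<Rightarrow> 'k \<Rightarrow> real"
  assumes "finite E" "finite U" "card E < card U"
  shows "\<exists>d. (\<forall>k. k \<notin> U \<longrightarrow> d k = 0) \<and> (\<exists>k\<in>U. d k \<noteq> 0) \<and> (\<forall>e\<in>E. (\<Sum>k\<in>U. A e k * d k) = 0)"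
  using assms
proof (induction E arbitrary: U A rule: finite_induct)
  case empty
  then obtain k where "k \<in> U"
    by fastforce
  then show ?case
    by (intro exI[of _ "\<lambda>j. if j = k then 1 else 0"]) auto
next
  case (insert e E)
  show ?case
  proof (cases "\<forall>k\<in>U. A e k = 0")
    case True
    then show ?thesis
      using insert.IH[OF insert.prems(1), of A] insert.hyps insert.prems by auto
  next
    case False
    then obtain k0 where k0: "k0 \<in> U" "A e k0 \<noteq> 0"
      by blast
    \<comment> \<open>Gaussian elimination: use equation \<open>e\<close> to eliminate the unknown \<open>k0\<close>.\<close>
    define A' where "A' e' k = A e' k - A e' k0 * A e k / A e k0" for e' k
    have "card E < card (U - {k0})"
      using insert k0 by simp
    then obtain d' where d'_supp: "\<forall>k. k \<notin> U - {k0} \<longrightarrow> d' k = 0"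
      and d'_nz: "\<exists>k\<in>U - {k0}. d' k \<noteq> 0" and d'_sol: "\<forall>e'\<in>E. (\<Sum>k\<in>U - {k0}. A' e' k * d' k) = 0"
      using insert.IH[of "U - {k0}" A'] insert.prems by blast
    define S where "S = (\<Sum>k\<in>U - {k0}. A e k * d' k)"
    define d where "d = d'(k0 := - S / A e k0)"
    have sum_d: "(\<Sum>k\<in>U. B k * d k) = (\<Sum>k\<in>U - {k0}. B k * d' k) - B k0 * S / A e k0" for B
    proof -
      have "(\<Sum>k\<in>U. B k * d k) = B k0 * d k0 + (\<Sum>k\<in>U - {k0}. B k * d k)"
        using k0 insert.prems by (simp add: sum.remove)
      also have "(\<Sum>k\<in>U - {k0}. B k * d k) = (\<Sum>k\<in>U - {k0}. B k * d' k)"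
        unfolding d_def by (intro sum.cong) auto
      finally show ?thesis
        by (simp add: d_def)
    qed
    have "(\<Sum>k\<in>U. A e' k * d k) = 0" if "e' \<in> E" for e'
    proof -
      have "0 = (\<Sum>k\<in>U - {k0}. A' e' k * d' k)"
        using d'_sol that by simp
      also have "\<dots> = (\<Sum>k\<in>U - {k0}. A e' k * d' k) - A e' k0 / A e k0 * S"
        unfolding A'_def S_def by (simp add: algebra_simps sum_subtractf sum_distrib_left)
      finally show ?thesis
        using sum_d[of "A e'"] by simp
    qed
    moreover have "(\<Sum>k\<in>U. A e k * d k) = 0"
      using sum_d[of "A e"] k0 by (simp add: S_def)
    moreover have "\<forall>k. k \<notin> U \<longrightarrow> d k = 0"
      using d'_supp k0 by (auto simp: d_def)
    moreover have "\<exists>k\<in>U. d k \<noteq> 0"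
      using d'_nz by (auto simp: d_def)
    ultimately show ?thesis
      by (intro exI[of _ d]) auto
  qed
qed

lemma abs_add_mult_eq_sgn:
  fixes b d t :: "'a::linordered_idom"
  assumes "\<bar>t\<bar> * \<bar>d\<bar> \<le> \<bar>b\<bar>"
  shows "\<bar>b + t * d\<bar> = \<bar>b\<bar> + t * (sgn b * d)"
proof -
  have "\<bar>t * d\<bar> \<le> \<bar>b\<bar>"
    using assms by (simp add: abs_mult)
  then show ?thesis
    by (cases b "0::'a" rule: linorder_cases) (auto simp: abs_le_iff)
qed

lemma lasso_obj_along_null_direction:
  assumes null: "\<forall>q\<in>N. (\<Sum>k\<in>K. A q k * d k) = 0" and small: "\<forall>k\<in>K. \<bar>t\<bar> * \<bar>d k\<bar> \<le> \<bar>b k\<bar>"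
  shows "lasso_obj N K c y A w (\<lambda>k. b k + t * d k)
       = lasso_obj N K c y A w b + t * (\<Sum>k\<in>K. w k * (sgn (b k) * d k))"
proof -
  have "(\<Sum>k\<in>K. A q k * (b k + t * d k)) = (\<Sum>k\<in>K. A q k * b k)" if "q \<in> N" for q
    using null that by (simp add: algebra_simps sum.distrib flip: sum_distrib_left)
  moreover have "(\<Sum>k\<in>K. w k * \<bar>b k + t * d k\<bar>) = (\<Sum>k\<in>K. w k * \<bar>b k\<bar>) + t * (\<Sum>k\<in>K. w k * (sgn (b k) * d k))"
    using small by (simp add: abs_add_mult_eq_sgn algebra_simps sum.distrib sum_distrib_left)
  ultimately show ?thesis
    unfolding lasso_obj_def by simp
qed

text \<open>The objective is affine along a null direction of the design as long as no sign changes,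
  so at a minimizer it is constant there.\<close>
lemma lasso_minimizer_along_null_direction:
  assumes b: "lasso_minimizer N K c y A w b"
    and d_supp: "\<forall>k. k \<notin> K \<longrightarrow> d k = 0" and null: "\<forall>q\<in>N. (\<Sum>k\<in>K. A q k * d k) = 0"
    and small: "\<forall>k\<in>K. \<bar>t\<bar> * \<bar>d k\<bar> \<le> \<bar>b k\<bar>"
  shows "lasso_minimizer N K c y A w (\<lambda>k. b k + t * d k)"
proof -
  let ?F = "lasso_obj N K c y A w"
  let ?s = "\<Sum>k\<in>K. w k * (sgn (b k) * d k)"
  have feasible: "\<forall>k. k \<notin> K \<longrightarrow> b k + u * d k = 0" for u
    using b d_supp unfolding lasso_minimizer_def by simp
  have "?F b \<le> ?F b + u * ?s" if "\<bar>u\<bar> = \<bar>t\<bar>" for u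
  proof -
    have "?F b \<le> ?F (\<lambda>k. b k + u * d k)"
      using b feasible[of u] unfolding lasso_minimizer_def by simp
    also have "\<dots> = ?F b + u * ?s"
      using small that by (intro lasso_obj_along_null_direction[OF null]) simp
    finally show ?thesis .
  qed
  from this[of t] this[of "- t"] have "?F (\<lambda>k. b k + t * d k) = ?F b"
    using lasso_obj_along_null_direction[OF null small] by simp
  then show ?thesis
    using b feasible[of t] unfolding lasso_minimizer_def by simp
qed

lemma lasso_minimizer_reduce_support:
  assumes K: "finite K" and N: "finite N" and b: "lasso_minimizer N K c y A w b"
    and many: "card N < card {k\<in>K. b k \<noteq> 0}"
  shows "\<exists>b'. lasso_minimizer N K c y A w b' \<and> card {k\<in>K. b' k \<noteq> 0} < card {k\<in>K. b k \<noteq> 0}"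
proof -
  define P where "P = {k\<in>K. b k \<noteq> 0}"
  have "finite P" "P \<subseteq> K"
    using K by (auto simp: P_def)
  then obtain d where d_supp: "\<forall>k. k \<notin> P \<longrightarrow> d k = 0" and d_nz: "\<exists>k\<in>P. d k \<noteq> 0"
    and d_null_P: "\<forall>q\<in>N. (\<Sum>k\<in>P. A q k * d k) = 0"
    using underdetermined_system_has_nonzero_solution[OF N _ many[folded P_def]] by blast
  have d_supp_K: "\<forall>k. k \<notin> K \<longrightarrow> d k = 0"
    using d_supp \<open>P \<subseteq> K\<close> by blast
  have d_null: "\<forall>q\<in>N. (\<Sum>k\<in>K. A q k * d k) = 0"
    using d_null_P d_supp K \<open>P \<subseteq> K\<close> by (simp add: sum.mono_neutral_right[of K P])
  define Q where "Q = {k\<in>P. d k \<noteq> 0}"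
  \<comment> \<open>Step to the first coordinate that the segment \<open>b + t d\<close> drives to zero.\<close>
  define k1 where "k1 = arg_min_on (\<lambda>k. \<bar>b k / d k\<bar>) Q"
  have Q: "finite Q" "Q \<noteq> {}"
    using \<open>finite P\<close> d_nz by (auto simp: Q_def)
  then have k1: "k1 \<in> Q"
    unfolding k1_def by (rule arg_min_if_finite(1))
  have k1_min: "\<bar>b k1 / d k1\<bar> \<le> \<bar>b k / d k\<bar>" if "k \<in> Q" for k
    unfolding k1_def using Q that by (rule arg_min_least)
  define t where "t = - b k1 / d k1"
  have small: "\<forall>k\<in>K. \<bar>t\<bar> * \<bar>d k\<bar> \<le> \<bar>b k\<bar>"
  proof
    fix k
    show "\<bar>t\<bar> * \<bar>d k\<bar> \<le> \<bar>b k\<bar>"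
    proof (cases "k \<in> Q")
      case True
      then have "\<bar>t\<bar> \<le> \<bar>b k\<bar> / \<bar>d k\<bar>" "\<bar>d k\<bar> > 0"
        using k1_min by (auto simp: t_def Q_def abs_divide)
      then show ?thesis
        by (simp add: pos_le_divide_eq)
    next
      case False
      then show ?thesis
        using d_supp by (auto simp: Q_def)
    qed
  qed
  have "{k\<in>K. b k + t * d k \<noteq> 0} \<subseteq> P - {k1}"
  proof
    fix k
    assume k: "k \<in> {k\<in>K. b k + t * d k \<noteq> 0}"
    have "d k1 \<noteq> 0"
      using k1 by (simp add: Q_def)
    then have "k \<noteq> k1"
      using k by (auto simp: t_def)
    moreover have "k \<in> P"
      using k d_supp by (auto simp: P_def)
    ultimately show "k \<in> P - {k1}"
      by blast
  qed
  then have "card {k\<in>K. b k + t * d k \<noteq> 0} \<le> card (P - {k1})"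
    using \<open>finite P\<close> by (intro card_mono) auto
  also have "\<dots> < card P"
    using \<open>finite P\<close> k1 by (intro card_Diff1_less) (auto simp: Q_def)
  finally show ?thesis
    using lasso_minimizer_along_null_direction[OF b d_supp_K d_null small] unfolding P_def by blast
qed

lemma lasso_minimizer_sparse:
  assumes K: "finite K" and N: "finite N"
    and c: "\<And>q. q \<in> N \<Longrightarrow> c q \<ge> 0" and w: "\<And>k. k \<in> K \<Longrightarrow> w k > 0"
  shows "\<exists>b. lasso_minimizer N K c y A w b \<and> card {k\<in>K. b k \<noteq> 0} \<le> card N"
proof -
  obtain b0 where "lasso_minimizer N K c y A w b0"
    using lasso_minimizer_exists[of K N c w y A] K c w by blast
  then have "\<exists>b. lasso_minimizer N K c y A w b \<and>
      (\<forall>b'. lasso_minimizer N K c y A w b' \<longrightarrow> card {k\<in>K. b k \<noteq> 0} \<le> card {k\<in>K. b' k \<noteq> 0})"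
    by (rule ex_has_least_nat[where m = "\<lambda>b. card {k\<in>K. b k \<noteq> 0}"])
  then obtain b where b: "lasso_minimizer N K c y A w b"
    and least: "\<forall>b'. lasso_minimizer N K c y A w b' \<longrightarrow> card {k\<in>K. b k \<noteq> 0} \<le> card {k\<in>K. b' k \<noteq> 0}"
    by blast
  have "card {k\<in>K. b k \<noteq> 0} \<le> card N"
  proof (rule ccontr)
    assume "\<not> card {k\<in>K. b k \<noteq> 0} \<le> card N"
    then obtain b' where "lasso_minimizer N K c y A w b'" "card {k\<in>K. b' k \<noteq> 0} < card {k\<in>K. b k \<noteq> 0}"
      using lasso_minimizer_reduce_support[OF K N b] by (auto simp: not_le)
    then show False
      using least by (auto simp: not_le[symmetric])
  qed
  then show ?thesis
    using b by blast
qed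

definition off_diag_index :: "nat \<Rightarrow> (nat \<times> nat) set" where
  "off_diag_index p = {(i, j). i < p \<and> j < p \<and> i \<noteq> j}"

definition strict_lower_index :: "nat \<Rightarrow> (nat \<times> nat) set" where
  "strict_lower_index p = {(i, j). j < i \<and> i < p}"

lemma off_diag_subset: "off_diag_index p \<subseteq> {..<p} \<times> {..<p}"
  by (auto simp: off_diag_index_def)

lemma strict_lower_subset: "strict_lower_index p \<subseteq> {..<p} \<times> {..<p}"
  by (auto simp: strict_lower_index_def)

lemma finite_off_diag_index [simp]: "finite (off_diag_index p)"
  using off_diag_subset by (rule finite_subset) simp

lemma finite_strict_lower_index [simp]: "finite (strict_lower_index p)"
  using strict_lower_subset by (rule finite_subset) simp

lemma zero_diag_iff_supported_off_diag:
  "zero_diag p B \<longleftrightarrow> (\<forall>k. k \<notin> off_diag_index p \<longrightarrow> case_prod B k = 0)"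
  unfolding zero_diag_def sq_mat_def off_diag_index_def by (auto simp: not_less)

lemma symmetric_zero_diag_eq_sum_lower:
  assumes "zero_diag p M" "\<forall>i j. M i j = M j i"
  obtains b where "\<forall>k. k \<notin> strict_lower_index p \<longrightarrow> b k = 0" "M = (\<lambda>i j. b (i, j) + b (j, i))"
proof
  define b where "b = (\<lambda>(i, j). if j < i then M i j else 0)"
  show "\<forall>k. k \<notin> strict_lower_index p \<longrightarrow> b k = 0"
    using assms(1) by (auto simp: b_def strict_lower_index_def zero_diag_def sq_mat_def)
  show "M = (\<lambda>i j. b (i, j) + b (j, i))"
  proof (intro ext)
    fix i j
    show "M i j = b (i, j) + b (j, i)"
      using assms by (cases i j rule: linorder_cases) (auto simp: b_def zero_diag_def)
  qed
qed

lemma card_vech_le_card: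
  assumes "finite S" "\<And>i j. j < i \<Longrightarrow> i < p \<Longrightarrow> M i j \<noteq> 0 \<Longrightarrow> (i, j) \<in> S"
  shows "card_vech p M \<le> card S"
  unfolding card_vech_def using assms by (intro card_mono) auto

lemma sum_square_select_row:
  fixes g :: "nat \<Rightarrow> nat \<Rightarrow> 'a::comm_monoid_add"
  assumes "m < p"
  shows "(\<Sum>k\<in>{..<p} \<times> {..<p}. case k of (r, j) \<Rightarrow> if r = m then g r j else 0) = (\<Sum>j<p. g m j)"
proof -
  have "(\<Sum>k\<in>{..<p} \<times> {..<p}. case k of (r, j) \<Rightarrow> if r = m then g r j else 0)
      = (\<Sum>r<p. if r = m then (\<Sum>j<p. g m j) else 0)"
    unfolding sum.cartesian_product' by (intro sum.cong) auto
  then show ?thesis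
    using assms by simp
qed

lemma sum_square_select_column:
  fixes g :: "nat \<Rightarrow> nat \<Rightarrow> 'a::comm_monoid_add"
  assumes "m < p"
  shows "(\<Sum>k\<in>{..<p} \<times> {..<p}. case k of (r, j) \<Rightarrow> if j = m then g r j else 0) = (\<Sum>r<p. g r m)"
  using assms unfolding sum.cartesian_product' by simp

lemma l1_curry:
  assumes "K \<subseteq> {..<p} \<times> {..<p}" "\<forall>k. k \<notin> K \<longrightarrow> b k = 0"
  shows "l1 p (curry b) = (\<Sum>k\<in>K. \<bar>b k\<bar>)"
proof -
  have "l1 p (curry b) = (\<Sum>k\<in>{..<p} \<times> {..<p}. \<bar>b k\<bar>)"
    unfolding l1_def sum.cartesian_product' by simp
  also have "\<dots> = (\<Sum>k\<in>K. \<bar>b k\<bar>)"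
    using assms by (intro sum.mono_neutral_right) auto
  finally show ?thesis .
qed

lemma l1_symmetrize_strict_lower:
  assumes b: "\<forall>k. k \<notin> strict_lower_index p \<longrightarrow> b k = 0"
  shows "l1 p (\<lambda>i j. b (i, j) + b (j, i)) = 2 * (\<Sum>k\<in>strict_lower_index p. \<bar>b k\<bar>)"
proof -
  have "b (i, j) = 0 \<or> b (j, i) = 0" for i j
    using b by (cases "j < i") (auto simp: strict_lower_index_def)
  then have "\<bar>b (i, j) + b (j, i)\<bar> = \<bar>b (i, j)\<bar> + \<bar>b (j, i)\<bar>" for i j
    by (metis abs_zero add.left_neutral add.right_neutral)
  then have "l1 p (\<lambda>i j. b (i, j) + b (j, i)) = l1 p (curry b) + (\<Sum>i<p. \<Sum>j<p. \<bar>b (j, i)\<bar>)"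
    unfolding l1_def by (simp add: sum.distrib)
  also have "(\<Sum>i<p. \<Sum>j<p. \<bar>b (j, i)\<bar>) = l1 p (curry b)"
    unfolding l1_def by (simp add: sum.swap[of "\<lambda>i j. \<bar>b (j, i)\<bar>"])
  finally show ?thesis
    using l1_curry[OF strict_lower_subset b] unfolding curry_def by simp
qed

lemma splice_obj_eq_lasso_obj:
  fixes X :: "nat \<Rightarrow> nat \<Rightarrow> real"
  assumes b: "\<forall>k. k \<notin> off_diag_index p \<longrightarrow> b k = 0"
  shows "splice_obj n p X lam D (curry b) = - (1/2) * ln (detp p D)
    + lasso_obj ({..<p} \<times> {..<n}) (off_diag_index p) (\<lambda>(m, _). 1 / (2 * (D m m)\<^sup>2)) (\<lambda>(m, i). X i m)
        (\<lambda>(m, i) (r, j). if r = m then X i j else 0) (\<lambda>_. lam) b"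
proof -
  have b_out: "b k = 0" if "k \<in> {..<p} \<times> {..<p}" "k \<notin> off_diag_index p" for k
    using b that by blast
  have b_diag: "b (j, j) = 0" for j
    using b by (simp add: off_diag_index_def)
  have residual: "(\<Sum>k\<in>off_diag_index p. (case k of (r, j) \<Rightarrow> if r = m then X i j else 0) * b k)
      = (\<Sum>j\<in>{..<p} - {m}. curry b m j * X i j)" if "m < p" for m i
  proof -
    have "(\<Sum>k\<in>off_diag_index p. (case k of (r, j) \<Rightarrow> if r = m then X i j else 0) * b k)
        = (\<Sum>k\<in>{..<p} \<times> {..<p}. case k of (r, j) \<Rightarrow> if r = m then X i j * b (r, j) else 0)"
      using b_out off_diag_subset
      by (intro sum.mono_neutral_cong_left) (auto simp: b_diag split: if_splits)
    also have "\<dots> = (\<Sum>j<p. X i j * b (m, j))"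
      using that by (rule sum_square_select_row)
    also have "\<dots> = (\<Sum>j\<in>{..<p} - {m}. curry b m j * X i j)"
      using that b_diag by (simp add: sum_diff1 mult.commute)
    finally show ?thesis .
  qed
  have "(\<Sum>q\<in>{..<p} \<times> {..<n}. (case q of (m, _) \<Rightarrow> 1 / (2 * (D m m)\<^sup>2))
          * ((case q of (m, i) \<Rightarrow> X i m) - (\<Sum>k\<in>off_diag_index p. (case q of (m, i) \<Rightarrow> \<lambda>(r, j). if r = m then X i j else 0) k * b k))\<^sup>2)
      = (1/2) * (\<Sum>m<p. (1 / (D m m)\<^sup>2) * sqn n (\<lambda>i. X i m - (\<Sum>j\<in>{..<p} - {m}. curry b m j * X i j)))"
    unfolding sqn_def sum.cartesian_product' by (simp add: residual sum_distrib_left)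
  then show ?thesis
    unfolding splice_obj_def lasso_obj_def l1_curry[OF off_diag_subset b] by (simp add: sum_distrib_left)
qed

lemma space_obj_eq_lasso_obj:
  fixes X :: "nat \<Rightarrow> nat \<Rightarrow> real"
  assumes b: "\<forall>k. k \<notin> strict_lower_index p \<longrightarrow> b k = 0"
  shows "space_obj n p X lam Od (\<lambda>i j. b (i, j) + b (j, i)) = - (1/2) * ln (detp p Od)
    + lasso_obj ({..<p} \<times> {..<n}) (strict_lower_index p) (\<lambda>(m, _). Od m m / 2) (\<lambda>(m, i). X i m)
        (\<lambda>(m, i) (r, j). (if r = m then sqrt (Od j j / Od m m) * X i j else 0)
                        + (if j = m then sqrt (Od r r / Od m m) * X i r else 0))
        (\<lambda>_. 2 * lam) b"
proof -
  have b_upper: "b (i, j) = 0" if "\<not> j < i" for i j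
    using b that by (simp add: strict_lower_index_def)
  have b_out: "b k = 0" if "k \<in> {..<p} \<times> {..<p}" "k \<notin> strict_lower_index p" for k
    using b that by blast
  have residual: "(\<Sum>k\<in>strict_lower_index p. (case k of (r, j) \<Rightarrow>
          (if r = m then sqrt (Od j j / Od m m) * X i j else 0)
          + (if j = m then sqrt (Od r r / Od m m) * X i r else 0)) * b k)
      = (\<Sum>j\<in>{..<p} - {m}. (b (m, j) + b (j, m)) * sqrt (Od j j / Od m m) * X i j)" if "m < p" for m i
  proof -
    let ?g = "\<lambda>j. sqrt (Od j j / Od m m) * X i j"
    have "(\<Sum>k\<in>strict_lower_index p. (case k of (r, j) \<Rightarrow>
          (if r = m then ?g j else 0) + (if j = m then ?g r else 0)) * b k)
        = (\<Sum>k\<in>{..<p} \<times> {..<p}. case k of (r, j) \<Rightarrow> if r = m then ?g j * b (r, j) else 0)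
          + (\<Sum>k\<in>{..<p} \<times> {..<p}. case k of (r, j) \<Rightarrow> if j = m then ?g r * b (r, j) else 0)"
      unfolding sum.distrib[symmetric] using b_out strict_lower_subset
      by (intro sum.mono_neutral_cong_left) (auto simp: distrib_right)
    also have "\<dots> = (\<Sum>j<p. (b (m, j) + b (j, m)) * ?g j)"
      using that by (simp add: sum_square_select_row sum_square_select_column sum.distrib algebra_simps)
    also have "\<dots> = (\<Sum>j\<in>{..<p} - {m}. (b (m, j) + b (j, m)) * ?g j)"
      using that b_upper by (simp add: sum_diff1)
    finally show ?thesis
      by (simp add: mult.assoc)
  qed
  have l1: "lam * l1 p (\<lambda>i j. b (i, j) + b (j, i)) = (\<Sum>k\<in>strict_lower_index p. 2 * lam * \<bar>b k\<bar>)"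
    using l1_symmetrize_strict_lower[OF b] by (simp add: sum_distrib_left ac_simps)
  have fit: "(\<Sum>q\<in>{..<p} \<times> {..<n}. (case q of (m, _) \<Rightarrow> Od m m / 2)
          * ((case q of (m, i) \<Rightarrow> X i m) - (\<Sum>k\<in>strict_lower_index p. (case q of (m, i) \<Rightarrow> \<lambda>(r, j).
              (if r = m then sqrt (Od j j / Od m m) * X i j else 0)
              + (if j = m then sqrt (Od r r / Od m m) * X i r else 0)) k * b k))\<^sup>2)
      = (1/2) * (\<Sum>m<p. Od m m * sqn n (\<lambda>i. X i m
          - (\<Sum>j\<in>{..<p} - {m}. (b (m, j) + b (j, m)) * sqrt (Od j j / Od m m) * X i j)))"
    unfolding sqn_def sum.cartesian_product' by (simp add: residual sum_distrib_left)
  show ?thesis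
    unfolding space_obj_def lasso_obj_def fit l1 by simp
qed

lemma splice_update_sparse:
  fixes X :: "nat \<Rightarrow> nat \<Rightarrow> real"
  assumes lam: "lam > 0"
  shows "\<exists>B. zero_diag p B \<and>
    (\<forall>B'. zero_diag p B' \<longrightarrow> splice_obj n p X lam D B \<le> splice_obj n p X lam D B') \<and>
    card_vech p (splice_est D B) \<le> n * p"
proof -
  let ?N = "{..<p} \<times> {..<n}" and ?K = "off_diag_index p"
  let ?lasso = "lasso_minimizer ?N ?K (\<lambda>(m, _). 1 / (2 * (D m m)\<^sup>2)) (\<lambda>(m, i). X i m)
    (\<lambda>(m, i) (r, j). if r = m then X i j else 0) (\<lambda>_. lam)"
  have "\<exists>b. ?lasso b \<and> card {k\<in>?K. b k \<noteq> 0} \<le> card ?N"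
    using lam by (intro lasso_minimizer_sparse) auto
  then obtain b where b: "?lasso b" and sparse: "card {k\<in>?K. b k \<noteq> 0} \<le> card ?N"
    by blast
  have supp: "\<forall>k. k \<notin> ?K \<longrightarrow> b k = 0"
    using b by (simp add: lasso_minimizer_def)
  have "zero_diag p (curry b)"
    using supp by (simp add: zero_diag_iff_supported_off_diag)
  moreover have "splice_obj n p X lam D (curry b) \<le> splice_obj n p X lam D B'" if "zero_diag p B'" for B'
  proof -
    have "\<forall>k. k \<notin> ?K \<longrightarrow> case_prod B' k = 0"
      using that by (simp add: zero_diag_iff_supported_off_diag)
    then show ?thesis
      using b splice_obj_eq_lasso_obj[where b = "case_prod B'"] splice_obj_eq_lasso_obj[OF supp]
      unfolding lasso_minimizer_def by simp
  qed
  moreover have "card_vech p (splice_est D (curry b)) \<le> n * p"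
  proof -
    have "card_vech p (splice_est D (curry b)) \<le> card {k\<in>?K. b k \<noteq> 0}"
      by (rule card_vech_le_card, simp) (auto simp: splice_est_def off_diag_index_def)
    with sparse show ?thesis
      by (simp add: card_cartesian_product mult.commute)
  qed
  ultimately show ?thesis
    by blast
qed

lemma space_update_sparse:
  fixes X :: "nat \<Rightarrow> nat \<Rightarrow> real"
  assumes lam: "lam > 0" and Od: "diag_pos p Od"
  shows "\<exists>Oo. zero_diag p Oo \<and> (\<forall>i j. Oo i j = Oo j i) \<and>
    (\<forall>Oo'. zero_diag p Oo' \<and> (\<forall>i j. Oo' i j = Oo' j i) \<longrightarrow>
      space_obj n p X lam Od Oo \<le> space_obj n p X lam Od Oo') \<and>
    card_vech p (\<lambda>i j. Od i j + Oo i j) \<le> n * p"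
proof -
  let ?N = "{..<p} \<times> {..<n}" and ?K = "strict_lower_index p"
  let ?lasso = "lasso_minimizer ?N ?K (\<lambda>(m, _). Od m m / 2) (\<lambda>(m, i). X i m)
    (\<lambda>(m, i) (r, j). (if r = m then sqrt (Od j j / Od m m) * X i j else 0)
                    + (if j = m then sqrt (Od r r / Od m m) * X i r else 0))
    (\<lambda>_. 2 * lam)"
  have weights: "(case q of (m, _) \<Rightarrow> Od m m / 2) \<ge> 0" if "q \<in> ?N" for q
    using Od that by (auto simp: diag_pos_def less_imp_le)
  have "\<exists>b. ?lasso b \<and> card {k\<in>?K. b k \<noteq> 0} \<le> card ?N"
    using weights lam by (intro lasso_minimizer_sparse) auto
  then obtain b where b: "?lasso b" and sparse: "card {k\<in>?K. b k \<noteq> 0} \<le> card ?N"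
    by blast
  have supp: "\<forall>k. k \<notin> ?K \<longrightarrow> b k = 0"
    using b by (simp add: lasso_minimizer_def)
  define Oo where "Oo i j = b (i, j) + b (j, i)" for i j
  have "zero_diag p Oo"
    using supp by (auto simp: zero_diag_def sq_mat_def Oo_def strict_lower_index_def)
  moreover have "space_obj n p X lam Od Oo \<le> space_obj n p X lam Od Oo'"
    if Oo': "zero_diag p Oo'" "\<forall>i j. Oo' i j = Oo' j i" for Oo'
  proof -
    obtain b' where "\<forall>k. k \<notin> ?K \<longrightarrow> b' k = 0" "Oo' = (\<lambda>i j. b' (i, j) + b' (j, i))"
      using symmetric_zero_diag_eq_sum_lower[OF Oo'] .
    then show ?thesis
      using b space_obj_eq_lasso_obj[where b = b'] space_obj_eq_lasso_obj[OF supp]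
      unfolding lasso_minimizer_def Oo_def[abs_def] by simp
  qed
  moreover have "card_vech p (\<lambda>i j. Od i j + Oo i j) \<le> n * p"
  proof -
    have "card_vech p (\<lambda>i j. Od i j + Oo i j) \<le> card {k\<in>?K. b k \<noteq> 0}"
      using Od supp
      by (intro card_vech_le_card, simp) (auto simp: diag_pos_def Oo_def strict_lower_index_def)
    with sparse show ?thesis
      by (simp add: card_cartesian_product mult.commute)
  qed
  ultimately show ?thesis
    by (auto simp: Oo_def)
qed

theorem corollary1:
  fixes n p :: nat and X :: "nat \<Rightarrow> nat \<Rightarrow> real" and lam :: real
  assumes lam: "lam > 0"
    and np: "real (n * p) < real p * (real p - 1) / 2"
  shows "(\<forall>D. diag_pos p D \<longrightarrow>
            (\<exists>B. zero_diag p B \<and>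
                 (\<forall>B'. zero_diag p B' \<longrightarrow> splice_obj n p X lam D B \<le> splice_obj n p X lam D B') \<and>
                 card_vech p (splice_est D B) \<le> n * p))
       \<and> (\<forall>Od. diag_pos p Od \<longrightarrow>
            (\<exists>Oo. zero_diag p Oo \<and> (\<forall>i j. Oo i j = Oo j i) \<and>
                 (\<forall>Oo'. zero_diag p Oo' \<and> (\<forall>i j. Oo' i j = Oo' j i) \<longrightarrow>
                        space_obj n p X lam Od Oo \<le> space_obj n p X lam Od Oo') \<and>
                 card_vech p (\<lambda>i j. Od i j + Oo i j) \<le> n * p))"
  using splice_update_sparse[OF lam] space_update_sparse[OF lam] by blast

end
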